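(* For every $\tau\ge0$, let $\rho_\tau=\{(x,v)\in\mathcal{H}:v=\tau\}$. Then $d_H((0,1),\rho_\tau):=\inf_{P\in\rho_\tau}d_H((0,1),P)=2|\sqrt\tau-1|$.
   Context: Let $\mathcal{H}=\{(x,v)\in\mathbb{R}^2:v\ge0\}$ and let $d_H$ be the Riemannian distance on $\mathcal{H}$ induced by the metric $ds^2=v^{-1}(dx^2+dv^2)$ on the open upper half-plane (extended to the boundary $v=0$). *)

theory Defs
  imports "HOL-Analysis.Analysis"
begin

definition halfplane :: "(real \<times> real) set" where
  "halfplane = {(x, v). v \<ge> 0}"

definition admissible_curve :: "(real \<Rightarrow> real \<times> real) \<Rightarrow> real \<times> real \<Rightarrow> real \<times> real \<Rightarrow> bool" where
  "admissible_curve \<gamma> p q \<longleftrightarrow>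
     \<gamma> piecewise_C1_differentiable_on {0..1} \<and> \<gamma> 0 = p \<and> \<gamma> 1 = q \<and>
     (\<forall>t\<in>{0..1}. \<gamma> t \<in> halfplane) \<and> (\<forall>t\<in>{0<..<1}. snd (\<gamma> t) > 0)"

text \<open>Length density for ds^2 = v^{-1}(dx^2 + dv^2): |gamma'(t)| / sqrt(v(gamma(t))).\<close>
definition H_speed :: "(real \<Rightarrow> real \<times> real) \<Rightarrow> real \<Rightarrow> real" where
  "H_speed \<gamma> t = norm (vector_derivative \<gamma> (at t)) / sqrt (snd (\<gamma> t))"

definition dH :: "real \<times> real \<Rightarrow> real \<times> real \<Rightarrow> real" where
  "dH p q = Inf {L. \<exists>\<gamma>. admissible_curve \<gamma> p q \<and> (H_speed \<gamma> has_integral L) {0..1}}"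

definition rho :: "real \<Rightarrow> (real \<times> real) set" where
  "rho \<tau> = {P \<in> halfplane. snd P = \<tau>}"

end

theory Submission imports Defs begin

text \<open>
  Along any admissible curve, \<open>2 \<surd>v\<close> changes at rate \<open>v'/\<surd>v\<close>, which is at most the
  length density \<open>|\<gamma>'|/\<surd>v\<close>; so every curve from \<open>(0,1)\<close> to height \<open>\<tau>\<close> has length at least
  \<open>2|\<surd>\<tau> - 1|\<close>. The vertical segment, parametrised so that \<open>\<surd>v\<close> is affine, has exactly this
  length, and every point of \<open>\<rho>\<^sub>\<tau>\<close> can be reached by some curve of finite length.
\<close>

lemma admissible_curve_sqrt_height_integral:
  assumes "admissible_curve \<gamma> p q"
  obtains g' where "(g' has_integral (2 * sqrt (snd q) - 2 * sqrt (snd p))) {0..1}"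
    and "\<And>t. t \<in> {0..1} \<Longrightarrow> \<bar>g' t\<bar> \<le> H_speed \<gamma> t"
proof -
  from assms obtain S where S: "finite S" "\<gamma> C1_differentiable_on ({0..1} - S)"
    and cont: "continuous_on {0..1} \<gamma>" and ends: "\<gamma> 0 = p" "\<gamma> 1 = q"
    and pos: "\<And>t. t \<in> {0<..<1} \<Longrightarrow> snd (\<gamma> t) > 0"
    and hp: "\<And>t. t \<in> {0..1} \<Longrightarrow> \<gamma> t \<in> halfplane"
    unfolding admissible_curve_def piecewise_C1_differentiable_on_def by blast
  from S(2) obtain D where D: "\<And>t. t \<in> {0..1} - S \<Longrightarrow> (\<gamma> has_vector_derivative D t) (at t)"
    unfolding C1_differentiable_on_def by blast
  define g where "g t = 2 * sqrt (snd (\<gamma> t))" for t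
  define g' where "g' t = (if t \<in> {0<..<1} - S then snd (D t) / sqrt (snd (\<gamma> t)) else 0)" for t
  have deriv: "(g has_vector_derivative g' t) (at t)" if t: "t \<in> {0<..<1} - S" for t
  proof -
    have "((\<lambda>t. snd (\<gamma> t)) has_vector_derivative snd (D t)) (at t)"
      using D[of t] t has_derivative_snd unfolding has_vector_derivative_def by fastforce
    then have "((\<lambda>t. snd (\<gamma> t)) has_real_derivative snd (D t)) (at t)"
      by (simp add: has_real_derivative_iff_has_vector_derivative)
    from DERIV_cmult[OF DERIV_chain2[OF DERIV_real_sqrt[OF pos] this], of 2]
    show ?thesis using t pos[of t]
      by (simp add: g_def[abs_def] g'_def has_real_derivative_iff_has_vector_derivative field_simps)
  qed
  have "continuous_on {0..1} g" unfolding g_def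
    by (intro continuous_intros continuous_on_compose2[OF continuous_on_snd cont]) auto
  from fundamental_theorem_of_calculus_interior_strong[OF S(1) _ deriv this]
  have "(g' has_integral (2 * sqrt (snd q) - 2 * sqrt (snd p))) {0..1}"
    by (simp add: g_def ends)
  moreover have "\<bar>g' t\<bar> \<le> H_speed \<gamma> t" if t: "t \<in> {0..1}" for t
  proof (cases "t \<in> {0<..<1} - S")
    case True
    then have "vector_derivative \<gamma> (at t) = D t" by (intro vector_derivative_at D) auto
    moreover have "\<bar>snd (D t)\<bar> \<le> norm (D t)"
      by (metis norm_snd_le prod.collapse real_norm_def)
    ultimately show ?thesis using True pos[of t]
      by (simp add: g'_def H_speed_def abs_div divide_right_mono)
  next
    case False
    have "snd (\<gamma> t) \<ge> 0" using hp[OF t] by (auto simp: halfplane_def split: prod.splits)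
    with False show ?thesis by (auto simp: g'_def H_speed_def)
  qed
  ultimately show ?thesis using that by blast
qed

lemma admissible_curve_length_ge:
  assumes "admissible_curve \<gamma> p q" and "(H_speed \<gamma> has_integral L) {0..1}"
  shows "2 * \<bar>sqrt (snd q) - sqrt (snd p)\<bar> \<le> L"
proof -
  obtain g' where g': "(g' has_integral (2 * sqrt (snd q) - 2 * sqrt (snd p))) {0..1}"
    and bound: "\<And>t. t \<in> {0..1} \<Longrightarrow> \<bar>g' t\<bar> \<le> H_speed \<gamma> t"
    using admissible_curve_sqrt_height_integral[OF assms(1)] by blast
  have "2 * sqrt (snd q) - 2 * sqrt (snd p) \<le> L"
    by (rule has_integral_le[OF g' assms(2)]) (use bound in fastforce)
  moreover have "- (2 * sqrt (snd q) - 2 * sqrt (snd p)) \<le> L"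
    by (rule has_integral_le[OF has_integral_neg[OF g'] assms(2)]) (use bound in fastforce)
  ultimately show ?thesis by (simp add: abs_if)
qed

lemma dH_ge_sqrt_height_gap:
  assumes "admissible_curve \<gamma> p q" and "(H_speed \<gamma> has_integral L) {0..1}"
  shows "2 * \<bar>sqrt (snd q) - sqrt (snd p)\<bar> \<le> dH p q"
  unfolding dH_def using assms admissible_curve_length_ge by (intro cInf_greatest) blast+

lemma dH_le_length:
  assumes "admissible_curve \<gamma> p q" and "(H_speed \<gamma> has_integral L) {0..1}"
  shows "dH p q \<le> L"
proof -
  have "bdd_below {L. \<exists>\<gamma>. admissible_curve \<gamma> p q \<and> (H_speed \<gamma> has_integral L) {0..1}}"
    using admissible_curve_length_ge[of _ p q] by (auto simp: bdd_below_def)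
  then show ?thesis unfolding dH_def using assms by (intro cInf_lower) blast+
qed

text \<open>
  The square root of the height moves affinely from \<open>a\<close> to \<open>b\<close>, and the horizontal velocity is
  proportional to that square root; hence the length density is constant.
\<close>
definition root_affine_path :: "real \<Rightarrow> real \<Rightarrow> real \<Rightarrow> real \<Rightarrow> real \<Rightarrow> real \<times> real" where
  "root_affine_path x0 a x1 b t =
     (x0 + 2 * (x1 - x0) / (a + b) * (a * t + (b - a) * t\<^sup>2 / 2), (a + t * (b - a))\<^sup>2)"

lemma root_affine_path_has_vector_derivative:
  "(root_affine_path x0 a x1 b has_vector_derivative
     (2 * (x1 - x0) / (a + b) * (a + t * (b - a)), 2 * (a + t * (b - a)) * (b - a))) (at t)"
proof -
  have "((\<lambda>t. x0 + c * (a * t + (b - a) * t\<^sup>2 / 2)) has_real_derivative c * (a + t * (b - a))) (at t)"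
    for c :: real
    by (auto intro!: derivative_eq_intros simp: field_simps)
  moreover have "((\<lambda>t. (a + t * (b - a))\<^sup>2) has_real_derivative 2 * (a + t * (b - a)) * (b - a)) (at t)"
    by (auto intro!: derivative_eq_intros)
  ultimately show ?thesis
    unfolding root_affine_path_def[abs_def] has_real_derivative_iff_has_vector_derivative
    by (rule has_vector_derivative_Pair)
qed

lemma root_affine_path_root_pos:
  fixes a b t :: real
  assumes "a > 0" "b \<ge> 0" "0 \<le> t" "t < 1"
  shows "a + t * (b - a) > 0"
proof -
  have "a + t * (b - a) = (1 - t) * a + t * b" by (simp add: algebra_simps)
  moreover have "(1 - t) * a > 0" "t * b \<ge> 0" using assms by auto
  ultimately show ?thesis by linarith
qed

lemma admissible_root_affine_path:
  assumes "a > 0" "b \<ge> 0"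
  shows "admissible_curve (root_affine_path x0 a x1 b) (x0, a\<^sup>2) (x1, b\<^sup>2)"
  unfolding admissible_curve_def
proof (intro conjI ballI)
  have "continuous_on {0..1} (\<lambda>t. (2 * (x1 - x0) / (a + b) * (a + t * (b - a)),
      2 * (a + t * (b - a)) * (b - a)))" (is "continuous_on _ ?D")
    by (intro continuous_intros)
  then have "root_affine_path x0 a x1 b C1_differentiable_on {0..1}"
    unfolding C1_differentiable_on_def
    using root_affine_path_has_vector_derivative by (intro exI[of _ ?D]) blast
  then show "root_affine_path x0 a x1 b piecewise_C1_differentiable_on {0..1}"
    by (rule C1_differentiable_imp_piecewise)
  have "2 * (x1 - x0) / (a + b) * (a * 1 + (b - a) * 1\<^sup>2 / 2) = x1 - x0"
    using assms by (simp add: field_simps)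
  then show "root_affine_path x0 a x1 b 1 = (x1, b\<^sup>2)"
    by (simp add: root_affine_path_def)
  show "snd (root_affine_path x0 a x1 b t) > 0" if "t \<in> {0<..<1}" for t
    using root_affine_path_root_pos[OF assms, of t] that by (simp add: root_affine_path_def)
qed (simp_all add: root_affine_path_def halfplane_def)

lemma H_speed_root_affine_path:
  assumes "a > 0" "b \<ge> 0" "0 \<le> t" "t < 1"
  shows "H_speed (root_affine_path x0 a x1 b) t =
    sqrt ((2 * (x1 - x0) / (a + b))\<^sup>2 + (2 * (b - a))\<^sup>2)"
proof -
  define w where "w = a + t * (b - a)"
  have w: "w > 0" using root_affine_path_root_pos[OF assms] by (simp add: w_def)
  have "H_speed (root_affine_path x0 a x1 b) t =
      sqrt ((2 * (x1 - x0) / (a + b) * w)\<^sup>2 + (2 * w * (b - a))\<^sup>2) / sqrt (w\<^sup>2)"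
    unfolding H_speed_def vector_derivative_at[OF root_affine_path_has_vector_derivative]
    by (simp add: root_affine_path_def norm_Pair w_def power_divide)
  also have "\<dots> = sqrt (((2 * (x1 - x0) / (a + b) * w)\<^sup>2 + (2 * w * (b - a))\<^sup>2) / w\<^sup>2)"
    by (simp add: real_sqrt_divide)
  also have "((2 * (x1 - x0) / (a + b) * w)\<^sup>2 + (2 * w * (b - a))\<^sup>2) / w\<^sup>2
      = (2 * (x1 - x0) / (a + b))\<^sup>2 + (2 * (b - a))\<^sup>2"
    using w by (simp add: field_simps power2_eq_square)
  finally show ?thesis .
qed

lemma root_affine_path_length:
  assumes "a > 0" "b \<ge> 0"
  shows "(H_speed (root_affine_path x0 a x1 b) has_integral
    sqrt ((2 * (x1 - x0) / (a + b))\<^sup>2 + (2 * (b - a))\<^sup>2)) {0..1}"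
proof -
  let ?L = "sqrt ((2 * (x1 - x0) / (a + b))\<^sup>2 + (2 * (b - a))\<^sup>2)"
  have const: "((\<lambda>_. ?L) has_integral ?L) {0..1::real}"
    using has_integral_const_real[of ?L 0 1] by simp
  have "?L = H_speed (root_affine_path x0 a x1 b) t" if "t \<in> {0..1} - {1}" for t
    using that H_speed_root_affine_path[OF assms, of t] by simp
  then show ?thesis
    by (intro has_integral_spike_finite[of "{1}", OF _ _ const]) simp_all
qed

theorem theorem2p4:
  fixes \<tau> :: real
  assumes "\<tau> \<ge> 0"
  shows "(INF P\<in>rho \<tau>. dH (0, 1) P) = 2 * \<bar>sqrt \<tau> - 1\<bar>"
proof -
  have start: "(0::real, 1::real) = (0, 1\<^sup>2)" and target: "(x, \<tau>) = (x, (sqrt \<tau>)\<^sup>2)" for x :: real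
    using assms by simp_all
  note admissible = admissible_root_affine_path[of 1 "sqrt \<tau>" 0, unfolded start[symmetric] target[symmetric]]
  note length = root_affine_path_length[of 1 "sqrt \<tau>" 0 0, simplified]
  have lower: "2 * \<bar>sqrt \<tau> - 1\<bar> \<le> dH (0, 1) P" if P: "P \<in> rho \<tau>" for P
  proof -
    obtain x where "P = (x, \<tau>)" using P by (cases P) (auto simp: rho_def)
    then show ?thesis
      using dH_ge_sqrt_height_gap[OF admissible root_affine_path_length] assms by simp
  qed
  have "(0, \<tau>) \<in> rho \<tau>" using assms by (simp add: rho_def halfplane_def)
  moreover have "bdd_below (dH (0, 1) ` rho \<tau>)"
    using lower by (rule bdd_belowI2)
  ultimately have "(INF P\<in>rho \<tau>. dH (0, 1) P) \<le> dH (0, 1) (0, \<tau>)"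
    by (rule cINF_lower[rotated])
  also have "\<dots> \<le> 2 * \<bar>sqrt \<tau> - 1\<bar>"
    using dH_le_length[OF admissible length] assms by (auto simp: abs_if)
  finally show ?thesis
    using lower \<open>(0, \<tau>) \<in> rho \<tau>\<close> by (intro antisym cINF_greatest) auto
qed

end
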